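(* Let $G=(V,E)$ be a finite graph, $B \subset U \subset V$, and let $f$ be an $\mathcal F_B$-measurable function on $\mathcal S_V$. Let $\tilde V = V_1 \cup V_2$ be the vertex set of the disjoint union $\tilde G$ of two copies of $G$, let $\phi:\tilde V\to\tilde V$ be the natural involution exchanging each $x\in V_1$ with the corresponding vertex of $V_2$, let $U_1$ be $U$ regarded as a subset of $V_1$, and let $A = V_1 \setminus U_1$. For $\tilde\pi \in \mathcal S_{\tilde V}$ let $Q_A(\tilde\pi)$ be the minimal $\tilde\pi$-invariant set containing $A$ which is compatible with $\phi$ (i.e. $\phi(Q_A)=Q_A$). Then, regarding $B$ as a subset of $V_1$, $$\big|\mathbb E_{U}(f(\cdot\oplus\mathrm{id})) - \mathbb E_{V}(f)\big| \leq 2 \|f\|_{\infty}\, \mathbb P_{\tilde V}\big(Q_A \cap B \neq \emptyset \,\big|\, \tilde\pi|_A = \mathrm{id}\big).$$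
   Context: For any finite graph with vertex set $W$ and $U\subset W$, $\mathcal S_U$ is the set of bijections $\pi:U\to U$ with $\pi(x)=x$ or $\{x,\pi(x)\}$ an edge; $\mathbb P_U(\pi)=e^{-\alpha\sum_{x\in U}\mathbb 1\{\pi(x)\neq x\}}/Z(U)$, $\mathbb E_U$ its expectation. For $B\subset V$, $\mathcal F_B$ is the $\sigma$-algebra on $\mathcal S_V$ generated by the values $\pi(x),\pi^{-1}(x)$, $x\in B$. $\pi\oplus\mathrm{id}$ is the extension of $\pi\in\mathcal S_U$ by the identity outside $U$. A set $D$ is $\tilde\pi$-invariant if $\tilde\pi(D)=D$; such a minimal set $Q_A$ exists since intersections of $\tilde\pi$-invariant, $\phi$-compatible sets containing $A$ retain these properties. *)

theory Defs
  imports Complex_Main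
begin

text \<open>A permutation in S_U is represented as a function on the whole
  vertex type that is a bijection of U, is the identity outside U (so it coincides with
  its extension by the identity), and moves each x only to x itself or to a neighbour.\<close>

definition graph_on :: "'a set \<Rightarrow> ('a \<Rightarrow> 'a \<Rightarrow> bool) \<Rightarrow> bool" where
  "graph_on V E \<longleftrightarrow> finite V \<and> (\<forall>x y. E x y \<longrightarrow> x \<in> V \<and> y \<in> V)
     \<and> (\<forall>x y. E x y \<longrightarrow> E y x) \<and> (\<forall>x. \<not> E x x)"

definition perms :: "('a \<Rightarrow> 'a \<Rightarrow> bool) \<Rightarrow> 'a set \<Rightarrow> ('a \<Rightarrow> 'a) set" where
  "perms E U = {\<pi>. bij_betw \<pi> U U \<and> (\<forall>x. x \<notin> U \<longrightarrow> \<pi> x = x)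
                    \<and> (\<forall>x\<in>U. \<pi> x = x \<or> E x (\<pi> x))}"

definition weight :: "real \<Rightarrow> 'a set \<Rightarrow> ('a \<Rightarrow> 'a) \<Rightarrow> real" where
  "weight \<alpha> U \<pi> = exp (- \<alpha> * real (card {x\<in>U. \<pi> x \<noteq> x}))"

definition partfun :: "('a \<Rightarrow> 'a \<Rightarrow> bool) \<Rightarrow> real \<Rightarrow> 'a set \<Rightarrow> real" where
  "partfun E \<alpha> U = (\<Sum>\<pi>\<in>perms E U. weight \<alpha> U \<pi>)"

definition expect :: "('a \<Rightarrow> 'a \<Rightarrow> bool) \<Rightarrow> real \<Rightarrow> 'a set \<Rightarrow> (('a \<Rightarrow> 'a) \<Rightarrow> real) \<Rightarrow> real" where
  "expect E \<alpha> U g = (\<Sum>\<pi>\<in>perms E U. g \<pi> * weight \<alpha> U \<pi>) / partfun E \<alpha> U"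

definition prob_ev :: "('a \<Rightarrow> 'a \<Rightarrow> bool) \<Rightarrow> real \<Rightarrow> 'a set \<Rightarrow> (('a \<Rightarrow> 'a) \<Rightarrow> bool) \<Rightarrow> real" where
  "prob_ev E \<alpha> U P = (\<Sum>\<pi>\<in>{\<pi>\<in>perms E U. P \<pi>}. weight \<alpha> U \<pi>) / partfun E \<alpha> U"

definition cond_prob :: "('a \<Rightarrow> 'a \<Rightarrow> bool) \<Rightarrow> real \<Rightarrow> 'a set \<Rightarrow> (('a \<Rightarrow> 'a) \<Rightarrow> bool)
     \<Rightarrow> (('a \<Rightarrow> 'a) \<Rightarrow> bool) \<Rightarrow> real" where
  "cond_prob E \<alpha> U P C = prob_ev E \<alpha> U (\<lambda>\<pi>. P \<pi> \<and> C \<pi>) / prob_ev E \<alpha> U C"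

text \<open>f is F_B-measurable on S_V: it depends only on the values pi(x), pi^{-1}(x), x in B.\<close>
definition measurable_B :: "('a \<Rightarrow> 'a \<Rightarrow> bool) \<Rightarrow> 'a set \<Rightarrow> 'a set \<Rightarrow> (('a \<Rightarrow> 'a) \<Rightarrow> real) \<Rightarrow> bool" where
  "measurable_B E V B f \<longleftrightarrow> (\<forall>\<pi>\<in>perms E V. \<forall>\<sigma>\<in>perms E V.
      (\<forall>x\<in>B. \<pi> x = \<sigma> x \<and> inv \<pi> x = inv \<sigma> x) \<longrightarrow> f \<pi> = f \<sigma>)"

definition sup_norm :: "('a \<Rightarrow> 'a \<Rightarrow> bool) \<Rightarrow> 'a set \<Rightarrow> (('a \<Rightarrow> 'a) \<Rightarrow> real) \<Rightarrow> real" where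
  "sup_norm E V f = Max ((\<lambda>\<pi>. \<bar>f \<pi>\<bar>) ` perms E V)"

text \<open>Disjoint union of two copies of G: vertex (x, True) is in copy V_1, (x, False) in V_2.\<close>
definition dbl_V :: "'a set \<Rightarrow> ('a \<times> bool) set" where
  "dbl_V V = V \<times> UNIV"

definition dbl_E :: "('a \<Rightarrow> 'a \<Rightarrow> bool) \<Rightarrow> 'a \<times> bool \<Rightarrow> 'a \<times> bool \<Rightarrow> bool" where
  "dbl_E E p q = (snd p = snd q \<and> E (fst p) (fst q))"

definition swap_copy :: "'a \<times> bool \<Rightarrow> 'a \<times> bool" where
  "swap_copy p = (fst p, \<not> snd p)"

definition Q_set :: "'b set \<Rightarrow> ('b \<Rightarrow> 'b) \<Rightarrow> 'b set \<Rightarrow> ('b \<Rightarrow> 'b) \<Rightarrow> 'b set" where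
  "Q_set W \<phi> A \<pi> = \<Inter>{D. D \<subseteq> W \<and> A \<subseteq> D \<and> \<pi> ` D = D \<and> \<phi> ` D = D}"

end

(* Condition the doubled model on \<pi>~ being the identity on A = (V - U) \<times> {True}. Then the
   restrictions of \<pi>~ to the two copies are independent with laws P_U and P_V, so
   E_U f - E_V f is the conditional expectation of f(copy 1) - f(copy 2). Exchanging the two
   copies outside Q_A is a weight-preserving involution of the conditioned model which fixes Q_A.
   On the event that Q_A misses B it exchanges the values of f read off the two copies, since f
   only sees B; so that event contributes nothing, and the rest is at most 2 \<parallel>f\<parallel> times the
   conditional probability of Q_A \<inter> B \<noteq> {}. *)

theory Submission
  imports Defs "HOL-Combinatorics.Permutations"
begin

lemma perms_iff: "\<pi> \<in> perms E U \<longleftrightarrow> \<pi> permutes U \<and> (\<forall>x\<in>U. \<pi> x = x \<or> E x (\<pi> x))"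
  by (auto simp: perms_def permutes_altdef)

lemma perms_permutes: "\<pi> \<in> perms E U \<Longrightarrow> \<pi> permutes U"
  by (simp add: perms_iff)

lemma perms_bij: "\<pi> \<in> perms E U \<Longrightarrow> bij \<pi>"
  by (rule permutes_bij[OF perms_permutes])

lemma id_in_perms: "id \<in> perms E U"
  by (simp add: perms_def)

lemma finite_perms: "finite U \<Longrightarrow> finite (perms E U)"
  by (rule finite_subset[OF _ finite_permutations]) (auto simp: perms_iff)

lemma perms_mono: "\<pi> \<in> perms E U \<Longrightarrow> U \<subseteq> V \<Longrightarrow> \<pi> \<in> perms E V"
  by (auto simp: perms_iff permutes_subset permutes_not_in)

lemma weight_pos: "weight \<alpha> U \<pi> > 0"
  by (simp add: weight_def)

lemma partfun_pos: "finite U \<Longrightarrow> partfun E \<alpha> U > 0"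
  unfolding partfun_def
  by (rule sum_pos2[OF finite_perms id_in_perms]) (auto simp: weight_pos less_imp_le)

lemma abs_le_sup_norm: "finite V \<Longrightarrow> \<pi> \<in> perms E V \<Longrightarrow> \<bar>f \<pi>\<bar> \<le> sup_norm E V f"
  unfolding sup_norm_def by (auto intro: Max_ge finite_perms)

lemma permutes_restrict: "p permutes V \<Longrightarrow> (\<And>x. x \<notin> X \<Longrightarrow> p x = x) \<Longrightarrow> p permutes X"
  by (simp add: permutes_def)

lemma inv_eq_on_invariant:
  assumes "bij p" "bij q" and invariant: "\<And>y. q y \<in> D \<longleftrightarrow> y \<in> D"
    and agree: "\<And>y. y \<in> D \<Longrightarrow> p y = q y" and "x \<in> D"
  shows "inv p x = inv q x"
proof -
  have q_inv: "q (inv q x) = x" using \<open>bij q\<close> by (simp add: bij_is_surj surj_f_inv_f)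
  then have "inv q x \<in> D" using invariant \<open>x \<in> D\<close> by metis
  then have "p (inv q x) = x" using agree q_inv by simp
  then show ?thesis using \<open>bij p\<close> by (simp add: bij_is_inj inv_f_eq)
qed

lemma sum_eq_0_by_involution:
  fixes g :: "'a \<Rightarrow> 'b::linordered_ab_group_add"
  assumes "\<And>x. x \<in> X \<Longrightarrow> T x \<in> X \<and> T (T x) = x \<and> g (T x) = - g x"
  shows "sum g X = 0"
proof -
  have "bij_betw T X X"
    by (rule bij_betw_byWitness[where f' = T]) (use assms in auto)
  then have "sum g X = sum (g \<circ> T) X" by (simp add: sum.reindex_bij_betw)
  also have "\<dots> = - sum g X" using assms by (simp add: sum_negf)
  finally show ?thesis by (simp add: equal_neg_zero)
qed

section \<open>The invariant set and the switching map\<close>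

(* Off the Q-set, \<sigma> conjugated by \<phi>: on the doubled graph, the two copies of \<sigma> are exchanged there. *)
definition switch :: "'b set \<Rightarrow> ('b \<Rightarrow> 'b) \<Rightarrow> 'b set \<Rightarrow> ('b \<Rightarrow> 'b) \<Rightarrow> 'b \<Rightarrow> 'b" where
  "switch W \<phi> A \<sigma> z = (if z \<in> Q_set W \<phi> A \<sigma> then \<sigma> z else \<phi> (\<sigma> (\<phi> z)))"

context
  fixes W :: "'b set" and \<phi> :: "'b \<Rightarrow> 'b" and A :: "'b set"
  assumes finite_W: "finite W" and involution: "\<And>z. \<phi> (\<phi> z) = z"
    and involution_mem_W: "\<And>z. \<phi> z \<in> W \<longleftrightarrow> z \<in> W" and A_subset_W: "A \<subseteq> W"
begin

lemma involution_image_W: "\<phi> ` W = W"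
  using involution involution_mem_W by (auto simp: image_iff) metis

lemma involution_eq_iff: "\<phi> a = \<phi> b \<longleftrightarrow> a = b"
  by (metis involution)

lemma Q_set_minimal: "D \<subseteq> W \<Longrightarrow> A \<subseteq> D \<Longrightarrow> \<pi> ` D = D \<Longrightarrow> \<phi> ` D = D \<Longrightarrow> Q_set W \<phi> A \<pi> \<subseteq> D"
  by (auto simp: Q_set_def)

lemma A_subset_Q_set: "A \<subseteq> Q_set W \<phi> A \<pi>"
  by (auto simp: Q_set_def)

lemma Q_set_subset_W: "\<pi> permutes W \<Longrightarrow> Q_set W \<phi> A \<pi> \<subseteq> W"
  using Q_set_minimal[of W] A_subset_W involution_image_W by (simp add: permutes_image)

lemma involution_mem_Q_set: "\<phi> z \<in> Q_set W \<phi> A \<pi> \<longleftrightarrow> z \<in> Q_set W \<phi> A \<pi>"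
proof -
  have "\<phi> ` Q_set W \<phi> A \<pi> \<subseteq> Q_set W \<phi> A \<pi>"
    unfolding Q_set_def by blast
  then show ?thesis using involution by (metis image_subset_iff)
qed

lemma Q_set_invariant:
  assumes "\<pi> permutes W"
  shows "\<pi> ` Q_set W \<phi> A \<pi> = Q_set W \<phi> A \<pi>" and "\<phi> ` Q_set W \<phi> A \<pi> = Q_set W \<phi> A \<pi>"
proof -
  let ?Q = "Q_set W \<phi> A \<pi>"
  have "\<pi> ` ?Q \<subseteq> ?Q" unfolding Q_set_def by blast
  moreover have "finite ?Q" using Q_set_subset_W[OF assms] finite_W by (rule finite_subset)
  ultimately show "\<pi> ` ?Q = ?Q" using endo_inj_surj permutes_inj_on[OF assms] by blast
  show "\<phi> ` ?Q = ?Q"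
    using involution_mem_Q_set involution by (auto simp: image_iff) metis
qed

lemma perm_mem_Q_set: "\<pi> permutes W \<Longrightarrow> \<pi> z \<in> Q_set W \<phi> A \<pi> \<longleftrightarrow> z \<in> Q_set W \<phi> A \<pi>"
  by (metis Q_set_invariant(1) inj_image_mem_iff permutes_inj)

context
  fixes \<sigma> assumes \<sigma>_permutes: "\<sigma> permutes W"
begin

lemma switch_outside_Q_set: "z \<notin> Q_set W \<phi> A \<sigma> \<Longrightarrow> switch W \<phi> A \<sigma> z = \<phi> (\<sigma> (\<phi> z))"
  by (simp add: switch_def)

lemma switch_mem_Q_set: "switch W \<phi> A \<sigma> z \<in> Q_set W \<phi> A \<sigma> \<longleftrightarrow> z \<in> Q_set W \<phi> A \<sigma>"
  using perm_mem_Q_set[OF \<sigma>_permutes] involution_mem_Q_set by (simp add: switch_def)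

lemma switch_permutes: "switch W \<phi> A \<sigma> permutes W"
proof (rule inj_imp_permutes[OF _ finite_W])
  show "inj_on (switch W \<phi> A \<sigma>) W"
  proof (rule inj_onI)
    fix a b assume eq: "switch W \<phi> A \<sigma> a = switch W \<phi> A \<sigma> b"
    then have same_side: "a \<in> Q_set W \<phi> A \<sigma> \<longleftrightarrow> b \<in> Q_set W \<phi> A \<sigma>"
      by (metis switch_mem_Q_set)
    have "\<sigma> a = \<sigma> b \<or> \<phi> (\<sigma> (\<phi> a)) = \<phi> (\<sigma> (\<phi> b))"
      using eq same_side by (auto simp: switch_def split: if_splits)
    then show "a = b"
      using permutes_inj[OF \<sigma>_permutes] involution by (metis injD)
  qed
  show "switch W \<phi> A \<sigma> z \<in> W" if "z \<in> W" for z
    using that involution_mem_W permutes_in_image[OF \<sigma>_permutes] by (simp add: switch_def)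
  show "switch W \<phi> A \<sigma> z = z" if "z \<notin> W" for z
    using that Q_set_subset_W[OF \<sigma>_permutes] involution involution_mem_W
      permutes_not_in[OF \<sigma>_permutes] by (auto simp: switch_def)
qed

lemma switch_in_perms:
  assumes "\<sigma> \<in> perms E W" and automorphism: "\<And>z y. E (\<phi> z) (\<phi> y) = E z y"
  shows "switch W \<phi> A \<sigma> \<in> perms E W"
proof -
  have "switch W \<phi> A \<sigma> z = z \<or> E z (switch W \<phi> A \<sigma> z)" if "z \<in> W" for z
  proof -
    have "\<sigma> (\<phi> z) = \<phi> z \<or> E (\<phi> z) (\<sigma> (\<phi> z))"
      using assms(1) that involution_mem_W by (auto simp: perms_iff)
    then have "\<phi> (\<sigma> (\<phi> z)) = z \<or> E z (\<phi> (\<sigma> (\<phi> z)))"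
      using automorphism[of "\<phi> z" "\<sigma> (\<phi> z)"] involution by auto
    then show ?thesis using assms(1) that by (auto simp: perms_iff switch_def)
  qed
  then show ?thesis using switch_permutes by (simp add: perms_iff)
qed

lemma switch_fixes: "\<forall>z\<in>A. \<sigma> z = z \<Longrightarrow> \<forall>z\<in>A. switch W \<phi> A \<sigma> z = z"
  using A_subset_Q_set by (auto simp: switch_def)

lemma Q_set_switch: "Q_set W \<phi> A (switch W \<phi> A \<sigma>) = Q_set W \<phi> A \<sigma>"
proof
  let ?Q = "Q_set W \<phi> A \<sigma>" and ?T = "switch W \<phi> A \<sigma>"
  have same_on_Q: "\<And>D. D \<subseteq> ?Q \<Longrightarrow> ?T ` D = \<sigma> ` D"
    by (auto simp: switch_def)
  show sub: "Q_set W \<phi> A ?T \<subseteq> ?Q"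
    using Q_set_minimal Q_set_subset_W A_subset_Q_set same_on_Q Q_set_invariant \<sigma>_permutes by simp
  have "\<sigma> ` Q_set W \<phi> A ?T = Q_set W \<phi> A ?T"
    using same_on_Q[OF sub] Q_set_invariant(1)[OF switch_permutes] by simp
  then show "?Q \<subseteq> Q_set W \<phi> A ?T"
    using Q_set_minimal Q_set_subset_W A_subset_Q_set Q_set_invariant(2) switch_permutes by simp
qed

lemma switch_switch: "switch W \<phi> A (switch W \<phi> A \<sigma>) = \<sigma>"
  using involution involution_mem_Q_set by (auto simp: fun_eq_iff switch_def Q_set_switch)

lemma weight_switch: "weight \<alpha> W (switch W \<phi> A \<sigma>) = weight \<alpha> W \<sigma>"
proof -
  define h where "h z = (if z \<in> Q_set W \<phi> A \<sigma> then z else \<phi> z)" for z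
  have "bij_betw h {z \<in> W. \<sigma> z \<noteq> z} {z \<in> W. switch W \<phi> A \<sigma> z \<noteq> z}"
    by (rule bij_betw_byWitness[where f' = h])
      (auto simp: h_def switch_def involution involution_eq_iff involution_mem_Q_set involution_mem_W)
  then show ?thesis by (simp add: weight_def bij_betw_same_card)
qed

end
end

definition copy_perm :: "bool \<Rightarrow> ('a \<times> bool \<Rightarrow> 'a \<times> bool) \<Rightarrow> 'a \<Rightarrow> 'a" where
  "copy_perm b \<sigma> x = fst (\<sigma> (x, b))"

definition join_perms :: "('a \<Rightarrow> 'a) \<Rightarrow> ('a \<Rightarrow> 'a) \<Rightarrow> 'a \<times> bool \<Rightarrow> 'a \<times> bool" where
  "join_perms p\<^sub>1 p\<^sub>2 z = (if snd z then p\<^sub>1 (fst z) else p\<^sub>2 (fst z), snd z)"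

lemma finite_dbl_V: "finite V \<Longrightarrow> finite (dbl_V V)"
  by (simp add: dbl_V_def)

lemma swap_copy_Pair [simp]: "swap_copy (x, b) = (x, \<not> b)"
  by (simp add: swap_copy_def)

lemma swap_copy_swap_copy [simp]: "swap_copy (swap_copy z) = z"
  by (simp add: swap_copy_def)

lemma swap_copy_mem_dbl_V [simp]: "swap_copy z \<in> dbl_V V \<longleftrightarrow> z \<in> dbl_V V"
  by (simp add: swap_copy_def dbl_V_def mem_Times_iff)

lemma dbl_E_swap_copy [simp]: "dbl_E E (swap_copy z) (swap_copy y) = dbl_E E z y"
  by (simp add: swap_copy_def dbl_E_def)

lemma dbl_perm_apply:
  assumes "\<sigma> \<in> perms (dbl_E E) (dbl_V V)" shows "\<sigma> (x, b) = (copy_perm b \<sigma> x, b)"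
proof -
  have "snd (\<sigma> (x, b)) = b"
    using assms permutes_not_in[of \<sigma> "dbl_V V" "(x, b)"]
    by (cases "(x, b) \<in> dbl_V V") (auto simp: perms_iff dbl_E_def)
  then show ?thesis by (simp add: copy_perm_def prod_eq_iff)
qed

lemma copy_perm_in_perms:
  assumes "finite V" "X \<subseteq> V" and \<sigma>: "\<sigma> \<in> perms (dbl_E E) (dbl_V V)"
    and fixes_outside: "\<forall>x\<in>V - X. \<sigma> (x, b) = (x, b)"
  shows "copy_perm b \<sigma> \<in> perms E X"
proof -
  have \<sigma>_permutes: "\<sigma> permutes dbl_V V" using \<sigma> by (simp add: perms_iff)
  have "copy_perm b \<sigma> permutes V"
  proof (rule inj_imp_permutes[OF _ \<open>finite V\<close>])
    show "inj_on (copy_perm b \<sigma>) V"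
    proof (rule inj_onI)
      fix x y assume "copy_perm b \<sigma> x = copy_perm b \<sigma> y"
      then have "\<sigma> (x, b) = \<sigma> (y, b)" by (simp add: dbl_perm_apply[OF \<sigma>])
      then show "x = y" by (simp add: permutes_inj[OF \<sigma>_permutes] inj_eq)
    qed
    show "copy_perm b \<sigma> x \<in> V" if "x \<in> V" for x
      using that permutes_in_image[OF \<sigma>_permutes, of "(x, b)"] dbl_perm_apply[OF \<sigma>]
      by (simp add: dbl_V_def)
    show "copy_perm b \<sigma> x = x" if "x \<notin> V" for x
      using that permutes_not_in[OF \<sigma>_permutes, of "(x, b)"] by (simp add: dbl_V_def copy_perm_def)
  qed
  moreover have "copy_perm b \<sigma> x = x" if "x \<notin> X" for x
    using that fixes_outside permutes_not_in[OF \<open>copy_perm b \<sigma> permutes V\<close>, of x]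
    by (cases "x \<in> V") (auto simp: copy_perm_def)
  moreover have "copy_perm b \<sigma> x = x \<or> E x (copy_perm b \<sigma> x)" if "x \<in> X" for x
  proof -
    have "(x, b) \<in> dbl_V V" using that \<open>X \<subseteq> V\<close> by (auto simp: dbl_V_def)
    then show ?thesis using \<sigma> dbl_perm_apply[OF \<sigma>, of x b] by (force simp: perms_iff dbl_E_def)
  qed
  ultimately show ?thesis by (simp add: perms_iff permutes_restrict)
qed

lemma join_perms_in_perms:
  assumes "finite V" "p\<^sub>1 \<in> perms E V" "p\<^sub>2 \<in> perms E V"
  shows "join_perms p\<^sub>1 p\<^sub>2 \<in> perms (dbl_E E) (dbl_V V)"
proof -
  have p: "p\<^sub>1 permutes V" "p\<^sub>2 permutes V" using assms(2,3) by (simp_all add: perms_iff)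
  have "join_perms p\<^sub>1 p\<^sub>2 permutes dbl_V V"
  proof (rule inj_imp_permutes[OF _ finite_dbl_V[OF \<open>finite V\<close>]])
    show "inj_on (join_perms p\<^sub>1 p\<^sub>2) (dbl_V V)"
    proof (rule inj_onI)
      fix z y assume eq: "join_perms p\<^sub>1 p\<^sub>2 z = join_perms p\<^sub>1 p\<^sub>2 y"
      then have "snd z = snd y" by (simp add: join_perms_def)
      then show "z = y"
        using eq permutes_inj[OF p(1)] permutes_inj[OF p(2)]
        by (auto simp: join_perms_def prod_eq_iff inj_eq split: if_splits)
    qed
  qed (auto simp: join_perms_def dbl_V_def permutes_in_image[OF p(1)] permutes_in_image[OF p(2)]
      permutes_not_in[OF p(1)] permutes_not_in[OF p(2)])
  then show ?thesis
    using assms(2,3) by (auto simp: perms_iff join_perms_def dbl_V_def dbl_E_def)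
qed

lemma copy_perm_join_perms: "copy_perm b (join_perms p\<^sub>1 p\<^sub>2) = (if b then p\<^sub>1 else p\<^sub>2)"
  by (auto simp: copy_perm_def join_perms_def)

lemma join_perms_copy_perm:
  "\<sigma> \<in> perms (dbl_E E) (dbl_V V) \<Longrightarrow> join_perms (copy_perm True \<sigma>) (copy_perm False \<sigma>) = \<sigma>"
  by (auto simp: fun_eq_iff join_perms_def dbl_perm_apply)

section \<open>Coupling \<open>\<bbbP>\<^sub>U\<close> and \<open>\<bbbP>\<^sub>V\<close>\<close>

(* The doubled model conditioned on fixing (V - U) \<times> {True}; its two copies are independent,
   with laws P_U and P_V. *)
definition coupled_perms :: "('a \<Rightarrow> 'a \<Rightarrow> bool) \<Rightarrow> 'a set \<Rightarrow> 'a set \<Rightarrow> ('a \<times> bool \<Rightarrow> 'a \<times> bool) set" where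
  "coupled_perms E V U = {\<sigma> \<in> perms (dbl_E E) (dbl_V V). \<forall>z\<in>(V - U) \<times> {True}. \<sigma> z = z}"

lemma id_in_coupled_perms: "id \<in> coupled_perms E V U"
  by (simp add: coupled_perms_def id_in_perms)

context
  fixes V U :: "'a set" and E :: "'a \<Rightarrow> 'a \<Rightarrow> bool"
  assumes finite_V: "finite V" and U_subset_V: "U \<subseteq> V"
begin

lemma copy_perm_True_coupled: "\<sigma> \<in> coupled_perms E V U \<Longrightarrow> copy_perm True \<sigma> \<in> perms E U"
  by (rule copy_perm_in_perms[OF finite_V U_subset_V]) (auto simp: coupled_perms_def)

lemma copy_perm_False_coupled: "\<sigma> \<in> coupled_perms E V U \<Longrightarrow> copy_perm False \<sigma> \<in> perms E V"
  by (rule copy_perm_in_perms[OF finite_V subset_refl]) (auto simp: coupled_perms_def)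

lemma bij_betw_coupled_perms:
  "bij_betw (\<lambda>\<sigma>. (copy_perm True \<sigma>, copy_perm False \<sigma>)) (coupled_perms E V U) (perms E U \<times> perms E V)"
proof (rule bij_betw_byWitness[where f' = "\<lambda>(p\<^sub>1, p\<^sub>2). join_perms p\<^sub>1 p\<^sub>2"])
  show "(\<lambda>(p\<^sub>1, p\<^sub>2). join_perms p\<^sub>1 p\<^sub>2) ` (perms E U \<times> perms E V) \<subseteq> coupled_perms E V U"
  proof clarify
    fix p\<^sub>1 p\<^sub>2 assume p\<^sub>1: "p\<^sub>1 \<in> perms E U" and p\<^sub>2: "p\<^sub>2 \<in> perms E V"
    have "join_perms p\<^sub>1 p\<^sub>2 \<in> perms (dbl_E E) (dbl_V V)"
      using join_perms_in_perms[OF finite_V perms_mono[OF p\<^sub>1 U_subset_V] p\<^sub>2] .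
    moreover have "p\<^sub>1 x = x" if "x \<notin> U" for x
      using p\<^sub>1 that by (simp add: perms_def)
    ultimately show "join_perms p\<^sub>1 p\<^sub>2 \<in> coupled_perms E V U"
      by (auto simp: coupled_perms_def join_perms_def)
  qed
qed (auto simp: coupled_perms_def join_perms_copy_perm copy_perm_join_perms
    copy_perm_True_coupled copy_perm_False_coupled)

lemma weight_coupled_perms:
  assumes "\<sigma> \<in> coupled_perms E V U"
  shows "weight \<alpha> (dbl_V V) \<sigma> = weight \<alpha> U (copy_perm True \<sigma>) * weight \<alpha> V (copy_perm False \<sigma>)"
proof -
  let ?M\<^sub>1 = "{x \<in> U. copy_perm True \<sigma> x \<noteq> x}" and ?M\<^sub>2 = "{x \<in> V. copy_perm False \<sigma> x \<noteq> x}"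
  have \<sigma>: "\<sigma> \<in> perms (dbl_E E) (dbl_V V)" using assms by (simp add: coupled_perms_def)
  have fixed: "copy_perm True \<sigma> x = x" if "x \<notin> U" for x
    using copy_perm_True_coupled[OF assms] that by (simp add: perms_def)
  have moved: "{z \<in> dbl_V V. \<sigma> z \<noteq> z} = (\<lambda>x. (x, True)) ` ?M\<^sub>1 \<union> (\<lambda>x. (x, False)) ` ?M\<^sub>2"
  proof (intro set_eqI)
    fix z :: "'a \<times> bool"
    show "z \<in> {z \<in> dbl_V V. \<sigma> z \<noteq> z} \<longleftrightarrow> z \<in> (\<lambda>x. (x, True)) ` ?M\<^sub>1 \<union> (\<lambda>x. (x, False)) ` ?M\<^sub>2"
      using U_subset_V fixed by (cases z; cases "snd z") (auto simp: dbl_V_def dbl_perm_apply[OF \<sigma>])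
  qed
  have "finite ?M\<^sub>1" "finite ?M\<^sub>2"
    using finite_subset[OF U_subset_V finite_V] finite_V by simp_all
  then have "card {z \<in> dbl_V V. \<sigma> z \<noteq> z} = card ?M\<^sub>1 + card ?M\<^sub>2"
    unfolding moved by (subst card_Un_disjoint) (auto simp: card_image inj_on_def)
  then show ?thesis by (simp add: weight_def algebra_simps flip: exp_add)
qed

lemma sum_coupled_perms:
  "(\<Sum>\<sigma>\<in>coupled_perms E V U. G (copy_perm True \<sigma>) (copy_perm False \<sigma>) * weight \<alpha> (dbl_V V) \<sigma>)
     = (\<Sum>p\<^sub>1\<in>perms E U. \<Sum>p\<^sub>2\<in>perms E V. G p\<^sub>1 p\<^sub>2 * weight \<alpha> U p\<^sub>1 * weight \<alpha> V p\<^sub>2)"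
  using sum.reindex_bij_betw[OF bij_betw_coupled_perms,
      of "\<lambda>(p\<^sub>1, p\<^sub>2). G p\<^sub>1 p\<^sub>2 * weight \<alpha> U p\<^sub>1 * weight \<alpha> V p\<^sub>2"]
  by (simp add: weight_coupled_perms sum.cartesian_product mult.assoc cong: sum.cong)

end

lemma expect_diff_coupled:
  assumes "finite V" "U \<subseteq> V"
  shows "expect E \<alpha> U f - expect E \<alpha> V f
    = (\<Sum>\<sigma>\<in>coupled_perms E V U. (f (copy_perm True \<sigma>) - f (copy_perm False \<sigma>)) * weight \<alpha> (dbl_V V) \<sigma>)
      / (\<Sum>\<sigma>\<in>coupled_perms E V U. weight \<alpha> (dbl_V V) \<sigma>)"
proof -
  let ?C = "coupled_perms E V U" and ?w = "weight \<alpha> (dbl_V V)"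
  define Z\<^sub>U N\<^sub>U Z\<^sub>V N\<^sub>V where
    "Z\<^sub>U = partfun E \<alpha> U" "N\<^sub>U = (\<Sum>p\<in>perms E U. f p * weight \<alpha> U p)"
    "Z\<^sub>V = partfun E \<alpha> V" "N\<^sub>V = (\<Sum>p\<in>perms E V. f p * weight \<alpha> V p)"
  note sums = sum_coupled_perms[OF assms, where E = E and \<alpha> = \<alpha>]
  have "(\<Sum>\<sigma>\<in>?C. ?w \<sigma>) = Z\<^sub>U * Z\<^sub>V"
    using sums[of "\<lambda>_ _. 1"] by (simp add: Z\<^sub>U_N\<^sub>U_Z\<^sub>V_N\<^sub>V_def partfun_def sum_product)
  moreover have "(\<Sum>\<sigma>\<in>?C. f (copy_perm True \<sigma>) * ?w \<sigma>) = N\<^sub>U * Z\<^sub>V"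
    using sums[of "\<lambda>p\<^sub>1 _. f p\<^sub>1"] by (simp add: Z\<^sub>U_N\<^sub>U_Z\<^sub>V_N\<^sub>V_def partfun_def sum_product mult.assoc)
  moreover have "(\<Sum>\<sigma>\<in>?C. f (copy_perm False \<sigma>) * ?w \<sigma>) = Z\<^sub>U * N\<^sub>V"
    using sums[of "\<lambda>_ p\<^sub>2. f p\<^sub>2"]
    by (simp add: Z\<^sub>U_N\<^sub>U_Z\<^sub>V_N\<^sub>V_def partfun_def sum_product mult.assoc mult.left_commute)
  moreover have "Z\<^sub>U > 0" "Z\<^sub>V > 0"
    using partfun_pos finite_subset[OF assms(2,1)] assms(1) by (simp_all add: Z\<^sub>U_N\<^sub>U_Z\<^sub>V_N\<^sub>V_def)
  ultimately show ?thesis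
    by (simp add: expect_def Z\<^sub>U_N\<^sub>U_Z\<^sub>V_N\<^sub>V_def left_diff_distrib sum_subtractf field_simps)
qed

section \<open>Cancellation by switching\<close>

lemma copy_perm_True_switch:
  assumes "finite V" "A \<subseteq> dbl_V V" and \<sigma>: "\<sigma> \<in> perms (dbl_E E) (dbl_V V)"
    and "(x, True) \<notin> Q_set (dbl_V V) swap_copy A \<sigma>"
  shows "copy_perm True (switch (dbl_V V) swap_copy A \<sigma>) x = copy_perm False \<sigma> x"
proof -
  have "switch (dbl_V V) swap_copy A \<sigma> (x, True) = (copy_perm False \<sigma> x, True)"
    using switch_outside_Q_set[OF finite_dbl_V[OF assms(1)] swap_copy_swap_copy swap_copy_mem_dbl_V
        assms(2) perms_permutes[OF \<sigma>] assms(4)]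
    by (simp add: dbl_perm_apply[OF \<sigma>])
  then show ?thesis by (simp add: copy_perm_def)
qed

(* Off the Q-set the switched permutation shows on copy 1 what \<sigma> shows on copy 2; the preimages
   agree as well, because the complement of the Q-set is \<sigma>-invariant. *)
lemma measurable_B_switch:
  assumes "finite V" and A_subset: "A \<subseteq> dbl_V V" and \<sigma>: "\<sigma> \<in> perms (dbl_E E) (dbl_V V)"
    and measurable: "measurable_B E V B f"
    and disjoint: "Q_set (dbl_V V) swap_copy A \<sigma> \<inter> B \<times> {True} = {}"
  shows "f (copy_perm True (switch (dbl_V V) swap_copy A \<sigma>)) = f (copy_perm False \<sigma>)"
proof -
  note involution = finite_dbl_V[OF \<open>finite V\<close>] swap_copy_swap_copy swap_copy_mem_dbl_V A_subset
  let ?Q = "Q_set (dbl_V V) swap_copy A \<sigma>"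
  let ?p = "copy_perm True (switch (dbl_V V) swap_copy A \<sigma>)" and ?q = "copy_perm False \<sigma>"
  have "switch (dbl_V V) swap_copy A \<sigma> \<in> perms (dbl_E E) (dbl_V V)"
    using switch_in_perms[OF involution perms_permutes[OF \<sigma>] \<sigma>] by simp
  then have p: "?p \<in> perms E V" and q: "?q \<in> perms E V"
    using copy_perm_in_perms[OF \<open>finite V\<close> subset_refl] \<sigma> by auto
  have bij: "bij ?p" "bij ?q" using perms_bij p q by blast+
  have invariant: "(?q y, True) \<notin> ?Q \<longleftrightarrow> (y, True) \<notin> ?Q" for y
    using involution_mem_Q_set[OF involution, of "(_, False)" \<sigma>]
      perm_mem_Q_set[OF involution perms_permutes[OF \<sigma>], of "(y, False)"]
    by (simp add: dbl_perm_apply[OF \<sigma>])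
  have "?p x = ?q x \<and> inv ?p x = inv ?q x" if "x \<in> B" for x
  proof
    have "(x, True) \<notin> ?Q" using disjoint that by blast
    then show "?p x = ?q x" by (rule copy_perm_True_switch[OF \<open>finite V\<close> A_subset \<sigma>])
    show "inv ?p x = inv ?q x"
      by (rule inv_eq_on_invariant[OF bij, where D = "{y. (y, True) \<notin> ?Q}"])
        (use invariant copy_perm_True_switch[OF \<open>finite V\<close> A_subset \<sigma>] \<open>(x, True) \<notin> ?Q\<close> in auto)
  qed
  then show ?thesis using measurable p q unfolding measurable_B_def by blast
qed

lemma sum_coupled_perms_Q_set_disjoint_eq_0:
  assumes "finite V" and measurable: "measurable_B E V B f"
  shows "(\<Sum>\<sigma>\<in>{\<sigma> \<in> coupled_perms E V U.
             Q_set (dbl_V V) swap_copy ((V - U) \<times> {True}) \<sigma> \<inter> B \<times> {True} = {}}.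
           (f (copy_perm True \<sigma>) - f (copy_perm False \<sigma>)) * weight \<alpha> (dbl_V V) \<sigma>) = 0"
proof (rule sum_eq_0_by_involution)
  let ?A = "(V - U) \<times> {True}"
  let ?T = "switch (dbl_V V) swap_copy ?A"
  fix \<sigma> assume "\<sigma> \<in> {\<sigma> \<in> coupled_perms E V U. Q_set (dbl_V V) swap_copy ?A \<sigma> \<inter> B \<times> {True} = {}}"
  then have \<sigma>: "\<sigma> \<in> perms (dbl_E E) (dbl_V V)" and fixes_A: "\<forall>z\<in>?A. \<sigma> z = z"
    and disjoint: "Q_set (dbl_V V) swap_copy ?A \<sigma> \<inter> B \<times> {True} = {}"
    by (auto simp: coupled_perms_def)
  have A_subset: "?A \<subseteq> dbl_V V" by (auto simp: dbl_V_def)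
  note involution = finite_dbl_V[OF \<open>finite V\<close>] swap_copy_swap_copy swap_copy_mem_dbl_V A_subset
    perms_permutes[OF \<sigma>]
  have T\<sigma>: "?T \<sigma> \<in> perms (dbl_E E) (dbl_V V)"
    using switch_in_perms[OF involution \<sigma>] by simp
  have "?T \<sigma> \<in> coupled_perms E V U"
    using T\<sigma> switch_fixes[OF involution fixes_A] by (simp add: coupled_perms_def)
  moreover have disjoint_T: "Q_set (dbl_V V) swap_copy ?A (?T \<sigma>) \<inter> B \<times> {True} = {}"
    using disjoint Q_set_switch[OF involution] by simp
  moreover have TT: "?T (?T \<sigma>) = \<sigma>" using switch_switch[OF involution] .
  moreover have "f (copy_perm True (?T \<sigma>)) = f (copy_perm False \<sigma>)"
    using measurable_B_switch[OF \<open>finite V\<close> A_subset \<sigma> measurable disjoint] .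
  moreover have "f (copy_perm True \<sigma>) = f (copy_perm False (?T \<sigma>))"
    using measurable_B_switch[OF \<open>finite V\<close> A_subset T\<sigma> measurable disjoint_T] TT by simp
  ultimately show "?T \<sigma> \<in> {\<sigma> \<in> coupled_perms E V U. Q_set (dbl_V V) swap_copy ?A \<sigma> \<inter> B \<times> {True} = {}}
      \<and> ?T (?T \<sigma>) = \<sigma>
      \<and> (f (copy_perm True (?T \<sigma>)) - f (copy_perm False (?T \<sigma>))) * weight \<alpha> (dbl_V V) (?T \<sigma>)
        = - ((f (copy_perm True \<sigma>) - f (copy_perm False \<sigma>)) * weight \<alpha> (dbl_V V) \<sigma>)"
    using weight_switch[OF involution] by (simp add: algebra_simps)
qed

lemma cond_prob_coupled:
  assumes "finite V"
  shows "cond_prob (dbl_E E) \<alpha> (dbl_V V) P (\<lambda>\<pi>. \<forall>z\<in>(V - U) \<times> {True}. \<pi> z = z)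
     = (\<Sum>\<sigma>\<in>{\<sigma> \<in> coupled_perms E V U. P \<sigma>}. weight \<alpha> (dbl_V V) \<sigma>)
       / (\<Sum>\<sigma>\<in>coupled_perms E V U. weight \<alpha> (dbl_V V) \<sigma>)"
proof -
  have "{\<pi> \<in> perms (dbl_E E) (dbl_V V). P \<pi> \<and> (\<forall>z\<in>(V - U) \<times> {True}. \<pi> z = z)}
      = {\<sigma> \<in> coupled_perms E V U. P \<sigma>}"
    "{\<pi> \<in> perms (dbl_E E) (dbl_V V). \<forall>z\<in>(V - U) \<times> {True}. \<pi> z = z} = coupled_perms E V U"
    by (auto simp: coupled_perms_def)
  then show ?thesis
    using partfun_pos[OF finite_dbl_V[OF assms], of "dbl_E E" \<alpha>]
    unfolding cond_prob_def prob_ev_def by simp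
qed

lemma sum_weight_coupled_perms_pos:
  "finite V \<Longrightarrow> (\<Sum>\<sigma>\<in>coupled_perms E V U. weight \<alpha> (dbl_V V) \<sigma>) > 0"
  unfolding coupled_perms_def
  by (rule sum_pos2[OF _ id_in_coupled_perms[unfolded coupled_perms_def]])
    (auto simp: finite_perms finite_dbl_V weight_pos less_imp_le)

lemma abs_sum_coupled_perms_le:
  assumes "finite V" "U \<subseteq> V" "measurable_B E V B f"
  shows "\<bar>\<Sum>\<sigma>\<in>coupled_perms E V U. (f (copy_perm True \<sigma>) - f (copy_perm False \<sigma>)) * weight \<alpha> (dbl_V V) \<sigma>\<bar>
    \<le> 2 * sup_norm E V f * (\<Sum>\<sigma>\<in>{\<sigma> \<in> coupled_perms E V U.
        Q_set (dbl_V V) swap_copy ((V - U) \<times> {True}) \<sigma> \<inter> B \<times> {True} \<noteq> {}}. weight \<alpha> (dbl_V V) \<sigma>)"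
proof -
  define C where "C = coupled_perms E V U"
  define bad where "bad \<sigma> \<longleftrightarrow> Q_set (dbl_V V) swap_copy ((V - U) \<times> {True}) \<sigma> \<inter> B \<times> {True} \<noteq> {}" for \<sigma>
  define w where "w = weight \<alpha> (dbl_V V)"
  define g where "g \<sigma> = (f (copy_perm True \<sigma>) - f (copy_perm False \<sigma>)) * w \<sigma>" for \<sigma>
  let ?M = "sup_norm E V f"
  have "finite C"
    unfolding C_def coupled_perms_def using finite_perms[OF finite_dbl_V[OF \<open>finite V\<close>]] by simp
  then have "sum g C = sum g {\<sigma> \<in> C. bad \<sigma>} + sum g {\<sigma> \<in> C. \<not> bad \<sigma>}"
    by (subst sum.union_disjoint[symmetric]) (auto intro: sum.cong)
  also have "sum g {\<sigma> \<in> C. \<not> bad \<sigma>} = 0"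
    using sum_coupled_perms_Q_set_disjoint_eq_0[OF \<open>finite V\<close> assms(3)]
    by (simp add: C_def bad_def g_def w_def)
  finally have "\<bar>sum g C\<bar> \<le> (\<Sum>\<sigma>\<in>{\<sigma> \<in> C. bad \<sigma>}. \<bar>g \<sigma>\<bar>)" by simp
  also have "\<dots> \<le> (\<Sum>\<sigma>\<in>{\<sigma> \<in> C. bad \<sigma>}. 2 * ?M * w \<sigma>)"
  proof (rule sum_mono)
    fix \<sigma> assume "\<sigma> \<in> {\<sigma> \<in> C. bad \<sigma>}"
    then have "copy_perm True \<sigma> \<in> perms E V" "copy_perm False \<sigma> \<in> perms E V"
      using copy_perm_True_coupled[OF assms(1,2)] copy_perm_False_coupled[OF assms(1,2)]
        perms_mono[OF _ assms(2)] by (auto simp: C_def)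
    then have "\<bar>f (copy_perm True \<sigma>) - f (copy_perm False \<sigma>)\<bar> \<le> 2 * ?M"
      using abs_le_sup_norm[OF \<open>finite V\<close>, of _ E f] abs_triangle_ineq4 by (smt (verit))
    then show "\<bar>g \<sigma>\<bar> \<le> 2 * ?M * w \<sigma>"
      using weight_pos[of \<alpha> "dbl_V V" \<sigma>] by (simp add: g_def w_def abs_mult mult_right_mono)
  qed
  also have "\<dots> = 2 * ?M * sum w {\<sigma> \<in> C. bad \<sigma>}" by (simp add: sum_distrib_left)
  finally show ?thesis by (simp add: C_def bad_def g_def w_def)
qed

theorem proposition4p3:
  fixes V U B :: "'a set" and E :: "'a \<Rightarrow> 'a \<Rightarrow> bool" and \<alpha> :: real
    and f :: "('a \<Rightarrow> 'a) \<Rightarrow> real"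
  assumes "graph_on V E"
    and "B \<subseteq> U" and "U \<subseteq> V"
    and "measurable_B E V B f"
  shows "\<bar>expect E \<alpha> U f - expect E \<alpha> V f\<bar>
    \<le> 2 * sup_norm E V f *
       cond_prob (dbl_E E) \<alpha> (dbl_V V)
         (\<lambda>\<pi>. Q_set (dbl_V V) swap_copy ((V - U) \<times> {True}) \<pi> \<inter> (B \<times> {True}) \<noteq> {})
         (\<lambda>\<pi>. \<forall>z\<in>(V - U) \<times> {True}. \<pi> z = z)"
proof -
  have "finite V" using assms(1) by (simp add: graph_on_def)
  note Z_pos = sum_weight_coupled_perms_pos[OF \<open>finite V\<close>, where E = E and U = U and \<alpha> = \<alpha>]
  show ?thesis
    unfolding expect_diff_coupled[OF \<open>finite V\<close> assms(3)] cond_prob_coupled[OF \<open>finite V\<close>]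
      abs_div_pos[OF Z_pos, symmetric] times_divide_eq_right
    by (rule divide_right_mono[OF abs_sum_coupled_perms_le[OF \<open>finite V\<close> assms(3,4)] less_imp_le[OF Z_pos]])
qed

end
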